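(* Let $G=(V,E)$ be a network and consider an $\mathbb{F}_q$-valued rate-$\omega$ LNEC code on $G$, as in the context. Let $t\in T$ be a sink node with $\dim\Phi(t)=\omega$, and let $r$ be a nonnegative integer with $r\le C_t$. Then the code corrects at $t$ any error vector in $\mathcal{Z}(\mathcal{A}_t(r))$ if and only if it corrects at $t$ any error vector in $\mathcal{Z}(\mathcal{E}_t(r))$.
   Context: Network: $G=(V,E)$ is a finite directed acyclic graph (parallel edges allowed) with a single source node $s$ and a set of sink nodes $T\subseteq V\setminus\{s\}$; $s$ has no incoming edges and sink nodes have no outgoing edges. For an edge $e$, $\mathrm{tail}(e)$, $\mathrm{head}(e)$ are its tail and head; $\mathrm{In}(v)$, $\mathrm{Out}(v)$ are the incoming/outgoing edge sets of node $v$. A directed path is a sequence of edges $(e_1,\dots,e_m)$, $m\ge1$, with $\mathrm{tail}(e_{k+1})=\mathrm{head}(e_k)$. A cut separating node $v$ from node $u$ is a set of edges whose removal leaves no directed path from $u$ to $v$; $C_t$ is the minimum size of a cut separating sink $t$ from $s$. LNEC code: with rate $\omega\ge1$ and finite field $\mathbb{F}_q$, introduce imaginary source edges $d_1',\dots,d_\omega'$ ending at $s$ with $\mathrm{In}(s)=\{d_1',\dots,d_\omega'\}$, and for each $e\in E$ an imaginary error edge $e'$ with head $\mathrm{tail}(e)$; $E'=\{e':e\in E\}$ (for non-source nodes, $\mathrm{In}(v)$ contains only edges of $E$). The code is given by local encoding coefficients $k_{d,e}\in\mathbb{F}_q$ for $e\in E$, $d\in\mathrm{In}(\mathrm{tail}(e))$.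 Extended global encoding kernels are vectors in $\mathbb{F}_q^{\omega+|E|}$ indexed by $\{d_i'\}\cup E'$: $\tilde f_{d_i'}=1_{d_i'}$, $\tilde f_{e'}=1_{e'}$ (standard basis vectors), and recursively in topological order $\tilde f_e=\sum_{d\in\mathrm{In}(\mathrm{tail}(e))}k_{d,e}\tilde f_d+1_{e'}$. For sink $t$, $\mathrm{row}_t(d')=(\tilde f_{\hat e}(d'):\hat e\in\mathrm{In}(t))$, and $\Phi(t)=\langle\mathrm{row}_t(d_i'):1\le i\le\omega\rangle$. Error correction: an error vector $z=(z_e:e\in E)\in\mathbb{F}_q^{|E|}$ matches $\xi\subseteq E$ if $z_e=0$ for all $e\notin\xi$. For a source message $x\in\mathbb{F}_q^\omega$ and error vector $z$, the received vector at $t$ is $\tilde y_t(x,z)=(x\ z)\cdot\tilde F_t$ where $\tilde F_t=[\tilde f_e:e\in\mathrm{In}(t)]$. For a set $\mathcal{Z}$ of error vectors, the code corrects at $t$ any error vector in $\mathcal{Z}$ if for all $x,x'\in\mathbb{F}_q^\omega$ and $z,z'\in\mathcal{Z}$, $\tilde y_t(x,z)=\tilde y_t(x',z')$ implies $x=x'$. For a collection $\mathcal{C}$ of edge subsets, $\mathcal{Z}(\mathcal{C})=\{z\in\mathbb{F}_q^{|E|}: z\text{ matches some }\xi\in\mathcal{C}\}$. Graph notions: for $\xi\subseteq E$ and a node $u$, $A\subseteq E$ is a cut separating $u$ from $\xi$ if every directed path in $G$ whose first edge lies in $\xi$ and whose last edge has head $u$ contains an edge of $A$. $\mathrm{mincut}(\xi,u)$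 is the minimum size of such a cut. A minimum cut separating $u$ from $\xi$ is primary if it separates $u$ from every minimum cut separating $u$ from $\xi$; it exists and is unique. $\xi$ is primary for $u$ if $\xi$ is the primary minimum cut separating $u$ from $\xi$. $\mathcal{E}_t(r)=\{\xi\subseteq E:\mathrm{mincut}(\xi,t)\le r\}$, $\mathcal{A}_t(r)=\{\xi\subseteq E:|\xi|=r,\ \xi\text{ primary for }t\}$. *)

theory Defs
  imports Complex_Main "HOL-Library.Function_Algebras"
begin

text \<open>A network: node set V, edge set E (edges are abstract objects, so parallel
edges are allowed), tail/head maps, source s, sink set T.\<close>

definition is_path :: "'e set \<Rightarrow> ('e \<Rightarrow> 'v) \<Rightarrow> ('e \<Rightarrow> 'v) \<Rightarrow> 'e list \<Rightarrow> bool" where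
  "is_path E tail head p \<longleftrightarrow>
     p \<noteq> [] \<and> set p \<subseteq> E \<and> (\<forall>i. Suc i < length p \<longrightarrow> tail (p ! Suc i) = head (p ! i))"

definition network :: "'v set \<Rightarrow> 'e set \<Rightarrow> ('e \<Rightarrow> 'v) \<Rightarrow> ('e \<Rightarrow> 'v) \<Rightarrow> 'v \<Rightarrow> 'v set \<Rightarrow> bool" where
  "network V E tail head s T \<longleftrightarrow>
     finite V \<and> finite E \<and> (\<forall>e\<in>E. tail e \<in> V \<and> head e \<in> V) \<and>
     s \<in> V \<and> T \<subseteq> V - {s} \<and>
     (\<forall>e\<in>E. head e \<noteq> s) \<and> (\<forall>e\<in>E. tail e \<notin> T) \<and>
     (\<forall>p. is_path E tail head p \<longrightarrow> head (last p) \<noteq> tail (hd p))"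

definition node_cut :: "'e set \<Rightarrow> ('e \<Rightarrow> 'v) \<Rightarrow> ('e \<Rightarrow> 'v) \<Rightarrow> 'e set \<Rightarrow> 'v \<Rightarrow> 'v \<Rightarrow> bool" where
  "node_cut E tail head A v u \<longleftrightarrow> A \<subseteq> E \<and>
     (\<forall>p. is_path E tail head p \<and> tail (hd p) = u \<and> head (last p) = v \<longrightarrow> set p \<inter> A \<noteq> {})"

text \<open>C_t: minimum size of a cut separating sink t from s.\<close>
definition maxflow :: "'e set \<Rightarrow> ('e \<Rightarrow> 'v) \<Rightarrow> ('e \<Rightarrow> 'v) \<Rightarrow> 'v \<Rightarrow> 'v \<Rightarrow> nat" where
  "maxflow E tail head s t = Min {card A | A. node_cut E tail head A t s}"

definition edge_cut :: "'e set \<Rightarrow> ('e \<Rightarrow> 'v) \<Rightarrow> ('e \<Rightarrow> 'v) \<Rightarrow> 'e set \<Rightarrow> 'v \<Rightarrow> 'e set \<Rightarrow> bool" where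
  "edge_cut E tail head A u xi \<longleftrightarrow> A \<subseteq> E \<and>
     (\<forall>p. is_path E tail head p \<and> hd p \<in> xi \<and> head (last p) = u \<longrightarrow> set p \<inter> A \<noteq> {})"

definition mincut :: "'e set \<Rightarrow> ('e \<Rightarrow> 'v) \<Rightarrow> ('e \<Rightarrow> 'v) \<Rightarrow> 'e set \<Rightarrow> 'v \<Rightarrow> nat" where
  "mincut E tail head xi u = Min {card A | A. edge_cut E tail head A u xi}"

definition is_min_cut :: "'e set \<Rightarrow> ('e \<Rightarrow> 'v) \<Rightarrow> ('e \<Rightarrow> 'v) \<Rightarrow> 'e set \<Rightarrow> 'v \<Rightarrow> 'e set \<Rightarrow> bool" where
  "is_min_cut E tail head A u xi \<longleftrightarrow>
     edge_cut E tail head A u xi \<and> card A = mincut E tail head xi u"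

definition primary_min_cut :: "'e set \<Rightarrow> ('e \<Rightarrow> 'v) \<Rightarrow> ('e \<Rightarrow> 'v) \<Rightarrow> 'e set \<Rightarrow> 'v \<Rightarrow> 'e set \<Rightarrow> bool" where
  "primary_min_cut E tail head A u xi \<longleftrightarrow>
     is_min_cut E tail head A u xi \<and>
     (\<forall>B. is_min_cut E tail head B u xi \<longrightarrow> edge_cut E tail head A u B)"

definition primary_for :: "'e set \<Rightarrow> ('e \<Rightarrow> 'v) \<Rightarrow> ('e \<Rightarrow> 'v) \<Rightarrow> 'e set \<Rightarrow> 'v \<Rightarrow> bool" where
  "primary_for E tail head xi u \<longleftrightarrow> primary_min_cut E tail head xi u xi"

definition Ecal :: "'e set \<Rightarrow> ('e \<Rightarrow> 'v) \<Rightarrow> ('e \<Rightarrow> 'v) \<Rightarrow> 'v \<Rightarrow> nat \<Rightarrow> 'e set set" where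
  "Ecal E tail head t r = {xi. xi \<subseteq> E \<and> mincut E tail head xi t \<le> r}"

definition Acal :: "'e set \<Rightarrow> ('e \<Rightarrow> 'v) \<Rightarrow> ('e \<Rightarrow> 'v) \<Rightarrow> 'v \<Rightarrow> nat \<Rightarrow> 'e set set" where
  "Acal E tail head t r = {xi. xi \<subseteq> E \<and> card xi = r \<and> primary_for E tail head xi t}"

text \<open>Coordinates of extended global encoding kernels are indexed by
the type nat + e: Inl i stands for the imaginary source edge d_(i+1)' (i < omega),
Inr e for the imaginary error edge e'. The same type indexes the input edges of a
node: In(s) = imaginary source edges, In(v) = real incoming edges otherwise.\<close>

definition unitv :: "'i \<Rightarrow> 'i \<Rightarrow> 'a::field" where
  "unitv j = (\<lambda>i. if i = j then 1 else 0)"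

definition In_ext :: "nat \<Rightarrow> 'e set \<Rightarrow> ('e \<Rightarrow> 'v) \<Rightarrow> 'v \<Rightarrow> 'v \<Rightarrow> (nat + 'e) set" where
  "In_ext \<omega> E head s v =
     (if v = s then Inl ` {..<\<omega>} else Inr ` {d \<in> E. head d = v})"

definition fext :: "('e \<Rightarrow> (nat + 'e) \<Rightarrow> 'a::field) \<Rightarrow> nat + 'e \<Rightarrow> (nat + 'e) \<Rightarrow> 'a" where
  "fext F d = (case d of Inl i \<Rightarrow> unitv (Inl i) | Inr e \<Rightarrow> F e)"

text \<open>F are the extended global encoding kernels of the code with local coefficients k
(on a DAG these are uniquely determined by the recursion).\<close>
definition is_ext_kernels ::
  "nat \<Rightarrow> 'e set \<Rightarrow> ('e \<Rightarrow> 'v) \<Rightarrow> ('e \<Rightarrow> 'v) \<Rightarrow> 'v \<Rightarrow> ((nat + 'e) \<Rightarrow> 'e \<Rightarrow> 'a::field)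
   \<Rightarrow> ('e \<Rightarrow> (nat + 'e) \<Rightarrow> 'a) \<Rightarrow> bool" where
  "is_ext_kernels \<omega> E tail head s k F \<longleftrightarrow>
     (\<forall>e\<in>E. F e = (\<lambda>j. (\<Sum>d\<in>In_ext \<omega> E head s (tail e). k d e * fext F d j) + unitv (Inr e) j))"

text \<open>row_t(d_i'), as a vector indexed by In(t) (zero outside In(t)).\<close>
definition row :: "'e set \<Rightarrow> ('e \<Rightarrow> 'v) \<Rightarrow> ('e \<Rightarrow> (nat + 'e) \<Rightarrow> 'a::field) \<Rightarrow> 'v \<Rightarrow> nat \<Rightarrow> 'e \<Rightarrow> 'a" where
  "row E head F t i = (\<lambda>e. if e \<in> E \<and> head e = t then F e (Inl i) else 0)"

definition fscale :: "'a::field \<Rightarrow> ('e \<Rightarrow> 'a) \<Rightarrow> ('e \<Rightarrow> 'a)" where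
  "fscale c v = (\<lambda>x. c * v x)"

definition Phi :: "nat \<Rightarrow> 'e set \<Rightarrow> ('e \<Rightarrow> 'v) \<Rightarrow> ('e \<Rightarrow> (nat + 'e) \<Rightarrow> 'a::field) \<Rightarrow> 'v \<Rightarrow> ('e \<Rightarrow> 'a) set" where
  "Phi \<omega> E head F t = module.span fscale {row E head F t i | i. i < \<omega>}"

definition dimPhi :: "nat \<Rightarrow> 'e set \<Rightarrow> ('e \<Rightarrow> 'v) \<Rightarrow> ('e \<Rightarrow> (nat + 'e) \<Rightarrow> 'a::field) \<Rightarrow> 'v \<Rightarrow> nat" where
  "dimPhi \<omega> E head F t = vector_space.dim fscale (Phi \<omega> E head F t)"

text \<open>Received vector at t: (x z) . F_t, indexed by In(t) (zero outside In(t)).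
Messages x are vectors in F^omega, represented by functions vanishing at i >= omega;
error vectors z are indexed by E.\<close>
definition received :: "nat \<Rightarrow> 'e set \<Rightarrow> ('e \<Rightarrow> 'v) \<Rightarrow> ('e \<Rightarrow> (nat + 'e) \<Rightarrow> 'a::field) \<Rightarrow> 'v
    \<Rightarrow> (nat \<Rightarrow> 'a) \<Rightarrow> ('e \<Rightarrow> 'a) \<Rightarrow> 'e \<Rightarrow> 'a" where
  "received \<omega> E head F t x z = (\<lambda>ee. if ee \<in> E \<and> head ee = t then
       (\<Sum>i<\<omega>. x i * F ee (Inl i)) + (\<Sum>e\<in>E. z e * F ee (Inr e)) else 0)"

definition matches :: "('e \<Rightarrow> 'a::zero) \<Rightarrow> 'e set \<Rightarrow> bool" where
  "matches z xi \<longleftrightarrow> (\<forall>e. e \<notin> xi \<longrightarrow> z e = 0)"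

definition Zcal :: "'e set set \<Rightarrow> ('e \<Rightarrow> 'a::zero) set" where
  "Zcal C = {z. \<exists>xi\<in>C. matches z xi}"

definition corrects :: "nat \<Rightarrow> 'e set \<Rightarrow> ('e \<Rightarrow> 'v) \<Rightarrow> ('e \<Rightarrow> (nat + 'e) \<Rightarrow> 'a::field) \<Rightarrow> 'v
    \<Rightarrow> ('e \<Rightarrow> 'a) set \<Rightarrow> bool" where
  "corrects \<omega> E head F t Z \<longleftrightarrow>
     (\<forall>x x' z z'. (\<forall>i\<ge>\<omega>. x i = 0) \<and> (\<forall>i\<ge>\<omega>. x' i = 0) \<and> z \<in> Z \<and> z' \<in> Z \<and>
        received \<omega> E head F t x z = received \<omega> E head F t x' z' \<longrightarrow> x = x')"

end

(* Since A_t(r) is contained in E_t(r), only one direction needs work: every error vector z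
   matching some xi with mincut(xi, t) <= r must be shown to have the same effect at t as an
   error vector matching a member of A_t(r).

   Adding one edge to xi raises mincut(xi, t) by at most one, and mincut(E, t) >= C_t >= r, so xi
   extends to some X with mincut(X, t) = r.  The primary minimum cut Y separating t from X is
   primary for t, has r edges, and separates t from xi.  An error on an edge e from which t cannot
   be reached while avoiding Y acts on In(t) exactly like the errors k_{e,f} placed on the edges f
   leaving head(e); by induction along the DAG z is therefore replaced by an error vector
   supported on Y.  No hypothesis on omega, dim Phi(t), t in T or the size of the field is used.

   The primary minimum cut exists by uncrossing.  For minimum cuts Y and B, the last edges of
   their union on paths to t form a cut C, the first ones on paths from X form a cut C', and
   C and C' meet only inside both Y and B; counting shows that C is again minimum.  Moreover t is
   reachable avoiding C from exactly the edges from which it is reachable avoiding the union.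
   Hence a minimum cut minimising the set of edges from which t is reachable avoiding it
   separates t from every other minimum cut. *)

theory Submission
  imports Defs
begin

locale finite_digraph =
  fixes E :: "'e set" and tail head :: "'e \<Rightarrow> 'v"
  assumes finite_E: "finite E"
begin

abbreviation path :: "'e list \<Rightarrow> bool" where
  "path \<equiv> is_path E tail head"

abbreviation separates :: "'e set \<Rightarrow> 'v \<Rightarrow> 'e set \<Rightarrow> bool" where
  "separates \<equiv> edge_cut E tail head"

abbreviation min_cut :: "'e set \<Rightarrow> 'v \<Rightarrow> nat" where
  "min_cut \<equiv> mincut E tail head"

abbreviation in_edges :: "'v \<Rightarrow> 'e set" where
  "in_edges v \<equiv> {d \<in> E. head d = v}"

abbreviation out_edges :: "'v \<Rightarrow> 'e set" where
  "out_edges v \<equiv> {f \<in> E. tail f = v}"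

lemma is_path_Cons_Cons [simp]:
  "path (e # f # p) \<longleftrightarrow> e \<in> E \<and> tail f = head e \<and> path (f # p)"
proof -
  have "(\<forall>i. Suc i < length (e # f # p) \<longrightarrow> tail ((e # f # p) ! Suc i) = head ((e # f # p) ! i))
    \<longleftrightarrow> tail f = head e \<and> (\<forall>i. Suc i < length (f # p) \<longrightarrow> tail ((f # p) ! Suc i) = head ((f # p) ! i))"
    (is "?L \<longleftrightarrow> ?R")
  proof
    assume L: ?L
    show ?R using L[rule_format, of 0] L[rule_format, of "Suc _"] by auto
  qed (auto simp: nth_Cons split: nat.split)
  then show ?thesis by (auto simp: is_path_def)
qed

lemma is_path_singleton [simp]: "path [e] \<longleftrightarrow> e \<in> E"
  by (simp add: is_path_def)

lemma is_path_nonempty: "path p \<Longrightarrow> p \<noteq> []"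
  by (simp add: is_path_def)

lemma is_path_subset: "path p \<Longrightarrow> set p \<subseteq> E"
  by (simp add: is_path_def)

lemma is_path_append:
  "p \<noteq> [] \<Longrightarrow> q \<noteq> [] \<Longrightarrow> path (p @ q) \<longleftrightarrow> path p \<and> path q \<and> tail (hd q) = head (last p)"
proof (induction p rule: induct_list012)
  case (3 e f p)
  then show ?case by auto
qed (auto simp: neq_Nil_conv)

lemma is_path_appendD2: "path (p @ q) \<Longrightarrow> q \<noteq> [] \<Longrightarrow> path q"
  by (cases "p = []") (auto simp: is_path_append)

lemma is_path_appendD1: "path (p @ q) \<Longrightarrow> p \<noteq> [] \<Longrightarrow> path p"
  by (cases "q = []") (auto simp: is_path_append)

definition reach_avoiding :: "'e set \<Rightarrow> 'v \<Rightarrow> 'e set" where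
  "reach_avoiding A u = {e. \<exists>p. path p \<and> hd p = e \<and> head (last p) = u \<and> set p \<inter> A = {}}"

lemma reach_avoidingI:
  assumes "path (p @ e # q)" "head (last (e # q)) = u" "set (e # q) \<inter> A = {}"
  shows "e \<in> reach_avoiding A u"
  unfolding reach_avoiding_def using assms is_path_appendD2[OF assms(1)] by force

lemma reach_avoiding_subset: "reach_avoiding A u \<subseteq> E"
  unfolding reach_avoiding_def using is_path_subset is_path_nonempty hd_in_set by fastforce

lemma reach_avoiding_disjoint: "reach_avoiding A u \<inter> A = {}"
  unfolding reach_avoiding_def using is_path_nonempty hd_in_set by fastforce

lemma reach_avoiding_antimono: "A \<subseteq> B \<Longrightarrow> reach_avoiding B u \<subseteq> reach_avoiding A u"
  unfolding reach_avoiding_def by blast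

lemma reach_avoiding_Cons:
  assumes "e \<in> E" "e \<notin> A" "f \<in> reach_avoiding A u" "tail f = head e"
  shows "e \<in> reach_avoiding A u"
proof -
  obtain q where q: "path (f # q)" "head (last (f # q)) = u" "set (f # q) \<inter> A = {}"
    using assms(3) is_path_nonempty unfolding reach_avoiding_def by (fastforce simp: neq_Nil_conv)
  then show ?thesis
    using reach_avoidingI[of "[]" e "f # q"] assms by simp
qed

lemma edge_cut_iff_reach_avoiding:
  "separates A u X \<longleftrightarrow> A \<subseteq> E \<and> X \<inter> reach_avoiding A u = {}"
  unfolding edge_cut_def reach_avoiding_def by blast

lemma edge_cut_antimono: "X \<subseteq> X' \<Longrightarrow> separates A u X' \<Longrightarrow> separates A u X"
  unfolding edge_cut_def by blast

lemma edge_cut_mono: "A \<subseteq> A' \<Longrightarrow> A' \<subseteq> E \<Longrightarrow> separates A u X \<Longrightarrow> separates A' u X"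
  unfolding edge_cut_def by blast

lemma edge_cut_self: "A \<subseteq> E \<Longrightarrow> separates A u A"
  using reach_avoiding_disjoint by (auto simp: edge_cut_iff_reach_avoiding)

lemma edge_cut_trans:
  assumes Y: "separates Y u X" and C: "separates C u Y"
  shows "separates C u X"
proof -
  have "e \<notin> reach_avoiding C u" if e: "e \<in> X" for e
  proof
    assume "e \<in> reach_avoiding C u"
    then obtain p where p: "path p" "hd p = e" "head (last p) = u" "set p \<inter> C = {}"
      unfolding reach_avoiding_def by blast
    then have "set p \<inter> Y \<noteq> {}" using Y e unfolding edge_cut_def by blast
    then obtain p1 a p2 where p_eq: "p = p1 @ a # p2" and a: "a \<in> Y"
      by (metis disjoint_iff split_list)
    have "a \<in> reach_avoiding C u"
      using p p_eq by (intro reach_avoidingI[of p1]) auto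
    then show False using a C by (auto simp: edge_cut_iff_reach_avoiding)
  qed
  then show ?thesis using C by (auto simp: edge_cut_iff_reach_avoiding)
qed

lemma finite_cut_cards: "finite {card A |A. separates A u X}"
proof (rule finite_subset)
  show "{card A |A. separates A u X} \<subseteq> card ` Pow E"
    unfolding edge_cut_def by auto
qed (simp add: finite_E)

lemma mincut_le: "separates A u X \<Longrightarrow> min_cut X u \<le> card A"
  unfolding mincut_def using finite_cut_cards by (intro Min_le) auto

lemma ex_min_cut: "\<exists>A. is_min_cut E tail head A u X"
proof -
  have "separates E u X"
    unfolding edge_cut_def using is_path_nonempty is_path_subset hd_in_set by fastforce
  then have "min_cut X u \<in> {card A |A. separates A u X}"
    unfolding mincut_def using finite_cut_cards by (intro Min_in) auto
  then show ?thesis unfolding is_min_cut_def by auto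
qed

lemma mincut_insert_le:
  assumes "e \<in> E"
  shows "min_cut (insert e X) u \<le> Suc (min_cut X u)"
proof -
  obtain A where A: "separates A u X" "card A = min_cut X u"
    using ex_min_cut unfolding is_min_cut_def by blast
  have "separates (insert e A) u (insert e X)"
    using A(1) assms unfolding edge_cut_def by (auto simp: hd_in_set is_path_nonempty)
  then have "min_cut (insert e X) u \<le> card (insert e A)" by (rule mincut_le)
  also have "\<dots> \<le> Suc (card A)" by (cases "finite A") (simp_all add: card_insert_if)
  finally show ?thesis using A by simp
qed

lemma maxflow_le_mincut_edges: "maxflow E tail head s u \<le> min_cut E u"
proof -
  obtain A where A: "separates A u E" "card A = min_cut E u"
    using ex_min_cut unfolding is_min_cut_def by blast
  have "node_cut E tail head A u s"
    using A(1) is_path_nonempty is_path_subset hd_in_set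
    unfolding edge_cut_def node_cut_def by blast
  moreover have "finite {card A |A. node_cut E tail head A u s}"
    by (rule finite_subset[of _ "card ` Pow E"]) (auto simp: node_cut_def finite_E)
  ultimately show ?thesis
    unfolding maxflow_def using A(2) by (metis (mono_tags, lifting) Min_le mem_Collect_eq)
qed

lemma mincut_intermediate_value:
  assumes "S \<subseteq> E" "min_cut X u \<le> r" "r \<le> min_cut (X \<union> S) u"
  shows "\<exists>Z. X \<subseteq> Z \<and> Z \<subseteq> X \<union> S \<and> min_cut Z u = r"
  using finite_subset[OF assms(1) finite_E] assms
proof (induction S rule: finite_induct)
  case (insert a S)
  show ?case
  proof (cases "r \<le> min_cut (X \<union> S) u")
    case True
    then show ?thesis using insert by blast
  next
    case False
    have "min_cut (X \<union> insert a S) u \<le> Suc (min_cut (X \<union> S) u)"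
      using mincut_insert_le[of a "X \<union> S" u] insert.prems by simp
    then have "min_cut (X \<union> insert a S) u = r" using False insert.prems by linarith
    then show ?thesis by blast
  qed
qed auto

definition last_hits :: "'e set \<Rightarrow> 'v \<Rightarrow> 'e set" where
  "last_hits S u = {e \<in> S. \<exists>q. path (e # q) \<and> head (last (e # q)) = u \<and> set q \<inter> S = {}}"

definition first_hits :: "'e set \<Rightarrow> 'e set \<Rightarrow> 'e set" where
  "first_hits X S = {e \<in> S. \<exists>p. path (p @ [e]) \<and> hd (p @ [e]) \<in> X \<and> set p \<inter> S = {}}"

lemma last_hitsI:
  assumes "a \<in> S" "path (p @ a # q)" "head (last (a # q)) = u" "set q \<inter> S = {}"
  shows "a \<in> last_hits S u"
  using assms is_path_appendD2[OF assms(2)] unfolding last_hits_def by blast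

lemma first_hitsI:
  assumes "a \<in> S" "path (p @ a # q)" "hd (p @ a # q) \<in> X" "set p \<inter> S = {}"
  shows "a \<in> first_hits X S"
proof -
  have "path (p @ [a])"
    using assms(2) is_path_appendD1[of "p @ [a]" q] by (cases "q = []") simp_all
  moreover have "hd (p @ [a]) \<in> X" using assms(3) by (cases p) simp_all
  ultimately show ?thesis using assms(1,4) unfolding first_hits_def by blast
qed

lemma edge_cut_last_hits:
  assumes "separates S u X"
  shows "separates (last_hits S u) u X"
  unfolding edge_cut_def
proof (intro conjI allI impI)
  show "last_hits S u \<subseteq> E" using assms unfolding last_hits_def edge_cut_def by blast
  fix p assume p: "path p \<and> hd p \<in> X \<and> head (last p) = u"
  then have "\<exists>x\<in>set p. x \<in> S" using assms unfolding edge_cut_def by blast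
  then obtain p1 a p2 where p_eq: "p = p1 @ a # p2" and "a \<in> S" "\<forall>x\<in>set p2. x \<notin> S"
    using split_list_last_prop[of p "\<lambda>x. x \<in> S"] by blast
  then have "a \<in> last_hits S u"
    using p by (intro last_hitsI[of a S p1]) auto
  then show "set p \<inter> last_hits S u \<noteq> {}" using p_eq by auto
qed

lemma edge_cut_first_hits:
  assumes "separates S u X"
  shows "separates (first_hits X S) u X"
  unfolding edge_cut_def
proof (intro conjI allI impI)
  show "first_hits X S \<subseteq> E" using assms unfolding first_hits_def edge_cut_def by blast
  fix p assume p: "path p \<and> hd p \<in> X \<and> head (last p) = u"
  then have "\<exists>x\<in>set p. x \<in> S" using assms unfolding edge_cut_def by blast
  then obtain p1 a p2 where p_eq: "p = p1 @ a # p2" and "a \<in> S" "\<forall>x\<in>set p1. x \<notin> S"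
    using split_list_first_prop[of p "\<lambda>x. x \<in> S"] by blast
  then have "a \<in> first_hits X S"
    using p by (intro first_hitsI[of a S p1 p2]) auto
  then show "set p \<inter> first_hits X S \<noteq> {}" using p_eq by auto
qed

lemma last_hits_Int_first_hits_subset:
  assumes "separates A u X" "A \<subseteq> S"
  shows "last_hits S u \<inter> first_hits X S \<subseteq> A"
proof
  fix a assume "a \<in> last_hits S u \<inter> first_hits X S"
  then obtain p q where q: "path (a # q)" "head (last (a # q)) = u" "set q \<inter> S = {}"
    and p: "path (p @ [a])" "hd (p @ [a]) \<in> X" "set p \<inter> S = {}"
    unfolding last_hits_def first_hits_def by blast
  have "path (p @ a # q)"
    using p(1) q(1) is_path_append[of p "[a]"] is_path_append[of p "a # q"] by (cases "p = []") auto
  moreover have "hd (p @ a # q) \<in> X" using p(2) by (cases p) auto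
  moreover have "head (last (p @ a # q)) = u" using q(2) by simp
  ultimately have "set (p @ a # q) \<inter> A \<noteq> {}"
    using assms(1) unfolding edge_cut_def by blast
  then show "a \<in> A" using assms(2) p(3) q(3) by auto
qed

lemma reach_avoiding_last_hits: "reach_avoiding (last_hits S u) u = reach_avoiding S u"
proof
  show "reach_avoiding (last_hits S u) u \<subseteq> reach_avoiding S u"
  proof
    fix e assume "e \<in> reach_avoiding (last_hits S u) u"
    then obtain p where p: "path p" "hd p = e" "head (last p) = u" "set p \<inter> last_hits S u = {}"
      unfolding reach_avoiding_def by blast
    have "set p \<inter> S = {}"
    proof (rule ccontr)
      assume "set p \<inter> S \<noteq> {}"
      then obtain p1 a p2 where p_eq: "p = p1 @ a # p2" and "a \<in> S" "\<forall>x\<in>set p2. x \<notin> S"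
        using split_list_last_prop[of p "\<lambda>x. x \<in> S"] by blast
      then have "a \<in> last_hits S u"
        using p by (intro last_hitsI[of a S p1]) auto
      then show False using p(4) p_eq by auto
    qed
    then show "e \<in> reach_avoiding S u" unfolding reach_avoiding_def using p by auto
  qed
  show "reach_avoiding S u \<subseteq> reach_avoiding (last_hits S u) u"
    by (rule reach_avoiding_antimono) (auto simp: last_hits_def)
qed

lemma is_min_cut_last_hits_Un:
  assumes Y: "is_min_cut E tail head Y u X" and B: "is_min_cut E tail head B u X"
  shows "is_min_cut E tail head (last_hits (Y \<union> B) u) u X"
proof -
  define S where "S = Y \<union> B"
  define C where "C = last_hits S u"
  define C' where "C' = first_hits X S"
  have Ycut: "separates Y u X" and Bcut: "separates B u X"
    using Y B unfolding is_min_cut_def by auto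
  have SE: "S \<subseteq> E" using Ycut Bcut unfolding S_def edge_cut_def by blast
  then have Scut: "separates S u X" using edge_cut_mono[OF _ _ Ycut] unfolding S_def by blast
  have finS: "finite S" using finite_subset[OF SE finite_E] .
  have CS: "C \<subseteq> S" "C' \<subseteq> S" unfolding C_def C'_def last_hits_def first_hits_def by auto
  have finC: "finite C" "finite C'" using CS finS by (auto intro: finite_subset)
  have finYB: "finite Y" "finite B" using finS unfolding S_def by auto
  have "C \<inter> C' \<subseteq> Y \<inter> B"
    using last_hits_Int_first_hits_subset[OF Ycut] last_hits_Int_first_hits_subset[OF Bcut]
    unfolding C_def C'_def S_def by blast
  have "card C + card C' = card (C \<union> C') + card (C \<inter> C')"
    using card_Un_Int[OF finC] .
  also have "\<dots> \<le> card S + card (Y \<inter> B)"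
    using CS \<open>C \<inter> C' \<subseteq> Y \<inter> B\<close> finS by (intro add_mono card_mono) (auto simp: S_def)
  also have "\<dots> = card Y + card B"
    using card_Un_Int[OF finYB] unfolding S_def by simp
  finally have "card C + card C' \<le> 2 * min_cut X u"
    using Y B unfolding is_min_cut_def by simp
  moreover have "min_cut X u \<le> card C" "min_cut X u \<le> card C'"
    using mincut_le edge_cut_last_hits[OF Scut] edge_cut_first_hits[OF Scut]
    unfolding C_def C'_def by auto
  ultimately have "card C = min_cut X u" by linarith
  then show ?thesis
    using edge_cut_last_hits[OF Scut] unfolding is_min_cut_def C_def S_def by simp
qed

lemma ex_primary_min_cut: "\<exists>Y. primary_min_cut E tail head Y u X"
proof -
  let ?M = "{A. is_min_cut E tail head A u X}"
  obtain Y where Y: "Y \<in> ?M"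
    and Y_least: "\<And>A. A \<in> ?M \<Longrightarrow> card (reach_avoiding Y u) \<le> card (reach_avoiding A u)"
    using ex_has_least_nat[of "\<lambda>A. A \<in> ?M" _ "\<lambda>A. card (reach_avoiding A u)"] ex_min_cut
    by (metis mem_Collect_eq)
  have YE: "Y \<subseteq> E" using Y unfolding is_min_cut_def edge_cut_def by blast
  have "separates Y u B" if B: "is_min_cut E tail head B u X" for B
  proof (rule ccontr)
    assume "\<not> separates Y u B"
    then obtain e where e: "e \<in> B" "e \<in> reach_avoiding Y u"
      using YE by (auto simp: edge_cut_iff_reach_avoiding)
    define C where "C = last_hits (Y \<union> B) u"
    have "C \<in> ?M" using is_min_cut_last_hits_Un[OF _ B] Y unfolding C_def by blast
    have reach_C: "reach_avoiding C u = reach_avoiding (Y \<union> B) u"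
      unfolding C_def by (rule reach_avoiding_last_hits)
    have "reach_avoiding C u \<subset> reach_avoiding Y u"
    proof
      show "reach_avoiding C u \<subseteq> reach_avoiding Y u"
        unfolding reach_C by (rule reach_avoiding_antimono) blast
      show "reach_avoiding C u \<noteq> reach_avoiding Y u"
        using e reach_avoiding_disjoint[of "Y \<union> B" u] unfolding reach_C by blast
    qed
    then have "card (reach_avoiding C u) < card (reach_avoiding Y u)"
      using finite_subset[OF reach_avoiding_subset finite_E] by (rule psubset_card_mono[rotated])
    then show False using Y_least[OF \<open>C \<in> ?M\<close>] by linarith
  qed
  then show ?thesis using Y unfolding primary_min_cut_def by blast
qed

lemma primary_for_if_primary_min_cut:
  assumes "primary_min_cut E tail head Y u X"
  shows "primary_for E tail head Y u"
proof -
  have Ycut: "separates Y u X" and Ycard: "card Y = min_cut X u"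
    and Y_primary: "\<And>B. is_min_cut E tail head B u X \<Longrightarrow> separates Y u B"
    using assms unfolding primary_min_cut_def is_min_cut_def by auto
  have Yself: "separates Y u Y"
    using Ycut by (intro edge_cut_self) (simp add: edge_cut_def)
  have "min_cut X u \<le> min_cut Y u"
    using ex_min_cut[of u Y] edge_cut_trans[OF Ycut] mincut_le
    unfolding is_min_cut_def by metis
  then have Ymin: "min_cut Y u = card Y"
    using mincut_le[OF Yself] Ycard by linarith
  have "is_min_cut E tail head B u X" if "is_min_cut E tail head B u Y" for B
    using that edge_cut_trans[OF Ycut] Ymin Ycard unfolding is_min_cut_def by auto
  then show ?thesis
    using Yself Ymin Y_primary
    unfolding primary_for_def primary_min_cut_def is_min_cut_def by auto
qed

lemma ex_primary_cut_in_Acal: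
  assumes "xi \<subseteq> E" "min_cut xi u \<le> r" "r \<le> maxflow E tail head s u"
  shows "\<exists>Y\<in>Acal E tail head u r. separates Y u xi"
proof -
  have "r \<le> min_cut (xi \<union> (E - xi)) u"
    using assms(1,3) maxflow_le_mincut_edges[of s u] by (simp add: Un_absorb1)
  then obtain X where X: "xi \<subseteq> X" "min_cut X u = r"
    using mincut_intermediate_value[of "E - xi" xi u r] assms(2) by blast
  obtain Y where Y: "primary_min_cut E tail head Y u X"
    using ex_primary_min_cut by blast
  then have "Y \<in> Acal E tail head u r"
    using primary_for_if_primary_min_cut[OF Y] X(2)
    unfolding Acal_def primary_min_cut_def is_min_cut_def edge_cut_def by auto
  moreover have "separates Y u xi"
    using Y X(1) edge_cut_antimono unfolding primary_min_cut_def is_min_cut_def by blast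
  ultimately show ?thesis by blast
qed

end

lemma Acal_subset_Ecal: "Acal E tail head t r \<subseteq> Ecal E tail head t r"
  unfolding Acal_def Ecal_def primary_for_def primary_min_cut_def is_min_cut_def by auto

locale finite_dag = finite_digraph E tail head for E :: "'e set" and tail head :: "'e \<Rightarrow> 'v" +
  assumes no_cycle: "path p \<Longrightarrow> head (last p) \<noteq> tail (hd p)"
begin

definition edge_adj :: "('e \<times> 'e) set" where
  "edge_adj = {(d, e). d \<in> E \<and> e \<in> E \<and> head d = tail e}"

lemma trancl_edge_adj_imp_path:
  "(d, e) \<in> edge_adj\<^sup>+ \<Longrightarrow> \<exists>p. path (d # p) \<and> head (last (d # p)) = tail e"
proof (induction rule: trancl_induct)
  case (base e)
  then show ?case unfolding edge_adj_def by (intro exI[of _ "[]"]) auto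
next
  case (step e f)
  then obtain p where p: "path (d # p)" "head (last (d # p)) = tail e" by blast
  have "path ((d # p) @ [e])" "head e = tail f"
    using step(2) p is_path_append[of "d # p" "[e]"] unfolding edge_adj_def by auto
  then show ?case by (intro exI[of _ "p @ [e]"]) simp
qed

lemma acyclic_edge_adj: "acyclic edge_adj"
  unfolding acyclic_def using trancl_edge_adj_imp_path no_cycle by fastforce

lemma finite_edge_adj: "finite edge_adj"
  by (rule finite_subset[of _ "E \<times> E"]) (auto simp: edge_adj_def finite_E)

lemma wf_edge_adj: "wf edge_adj"
  using finite_acyclic_wf[OF finite_edge_adj acyclic_edge_adj] .

lemma wf_converse_edge_adj: "wf (edge_adj\<inverse>)"
  using finite_acyclic_wf_converse[OF finite_edge_adj acyclic_edge_adj] .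

lemma edge_recursion_unique:
  assumes H: "\<And>e. e \<in> E \<Longrightarrow> H e = (\<Sum>d\<in>in_edges (tail e). c d e * H d) + g e"
    and H': "\<And>e. e \<in> E \<Longrightarrow> H' e = (\<Sum>d\<in>in_edges (tail e). c d e * H' d) + g e"
  shows "e \<in> E \<Longrightarrow> H e = H' e"
proof (induction e rule: wf_induct_rule[OF wf_edge_adj])
  case (1 e)
  have "H d = H' d" if "d \<in> in_edges (tail e)" for d
    using 1 that unfolding edge_adj_def by auto
  then show ?case using H[OF 1(2)] H'[OF 1(2)] by simp
qed

end

definition error_image ::
  "'e set \<Rightarrow> ('e \<Rightarrow> 'v) \<Rightarrow> ('e \<Rightarrow> (nat + 'e) \<Rightarrow> 'a::field) \<Rightarrow> 'v \<Rightarrow> ('e \<Rightarrow> 'a) \<Rightarrow> 'e \<Rightarrow> 'a" where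
  "error_image E head F t z = (\<lambda>ee. if ee \<in> E \<and> head ee = t then \<Sum>e\<in>E. z e * F ee (Inr e) else 0)"

lemma received_cong_error_image:
  assumes "error_image E head F t z = error_image E head F t w"
  shows "received \<omega> E head F t x z = received \<omega> E head F t x w"
proof
  fix ee
  show "received \<omega> E head F t x z ee = received \<omega> E head F t x w ee"
    using fun_cong[OF assms, of ee] unfolding received_def error_image_def by auto
qed

lemma Zcal_mono: "C1 \<subseteq> C2 \<Longrightarrow> Zcal C1 \<subseteq> Zcal C2"
  unfolding Zcal_def by blast

lemma corrects_antimono:
  "Z1 \<subseteq> Z2 \<Longrightarrow> corrects \<omega> E head F t Z2 \<Longrightarrow> corrects \<omega> E head F t Z1"
  unfolding corrects_def by blast

lemma corrects_iff_if_error_images_covered: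
  assumes "Z1 \<subseteq> Z2"
    and covered: "\<And>z. z \<in> Z2 \<Longrightarrow> \<exists>w\<in>Z1. error_image E head F t w = error_image E head F t z"
  shows "corrects \<omega> E head F t Z1 \<longleftrightarrow> corrects \<omega> E head F t Z2"
proof
  assume corrects1: "corrects \<omega> E head F t Z1"
  show "corrects \<omega> E head F t Z2"
    unfolding corrects_def
  proof (intro allI impI)
    fix x x' z z'
    assume H: "(\<forall>i\<ge>\<omega>. x i = 0) \<and> (\<forall>i\<ge>\<omega>. x' i = 0) \<and> z \<in> Z2 \<and> z' \<in> Z2 \<and>
      received \<omega> E head F t x z = received \<omega> E head F t x' z'"
    obtain w w' where "w \<in> Z1" "w' \<in> Z1"
      and "error_image E head F t w = error_image E head F t z"
      and "error_image E head F t w' = error_image E head F t z'"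
      using H covered by meson
    then show "x = x'"
      using H corrects1 received_cong_error_image unfolding corrects_def by metis
  qed
qed (rule corrects_antimono[OF assms(1)])

lemma error_image_lincomb:
  "error_image E head F t (\<lambda>b. \<Sum>f\<in>S. c f * W f b)
     = (\<lambda>ee. \<Sum>f\<in>S. c f * error_image E head F t (W f) ee)"
  unfolding error_image_def
  by (auto simp: fun_eq_iff sum_distrib_left sum_distrib_right mult.assoc intro: sum.swap)

lemma sum_unitv_mult: "finite A \<Longrightarrow> e \<in> A \<Longrightarrow> (\<Sum>b\<in>A. unitv e b * g b) = g e"
  unfolding unitv_def by (simp add: if_distrib[of "\<lambda>y. y * _"] cong: if_cong)

lemma error_image_unitv:
  assumes "finite E" "e \<in> E"
  shows "error_image E head F t (unitv e) = (\<lambda>ee. if ee \<in> E \<and> head ee = t then F ee (Inr e) else 0)"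
  using assms unfolding error_image_def by (auto simp: fun_eq_iff sum_unitv_mult)

lemma lincomb_unitv:
  assumes "finite xi" "matches z xi"
  shows "z = (\<lambda>b. \<Sum>e\<in>xi. z e * unitv e b)"
  using assms unfolding matches_def unitv_def by (auto simp: fun_eq_iff if_distrib cong: if_cong)

locale lnec_code =
  fixes V :: "'v set" and E :: "'e set" and tail head :: "'e \<Rightarrow> 'v" and s :: 'v
    and T :: "'v set" and \<omega> :: nat and k :: "(nat + 'e) \<Rightarrow> 'e \<Rightarrow> 'a::field"
    and F :: "'e \<Rightarrow> (nat + 'e) \<Rightarrow> 'a"
  assumes network: "network V E tail head s T"
    and kernels: "is_ext_kernels \<omega> E tail head s k F"

sublocale lnec_code \<subseteq> finite_dag E tail head
  using network unfolding network_def by unfold_locales blast+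

context lnec_code
begin

lemma kernel_Inr_rec:
  assumes "e \<in> E"
  shows "F e (Inr b) = (\<Sum>d\<in>in_edges (tail e). k (Inr d) e * F d (Inr b)) + (if e = b then 1 else 0)"
proof -
  have "F e (Inr b) = (\<Sum>d\<in>In_ext \<omega> E head s (tail e). k d e * fext F d (Inr b))
      + (if e = b then 1 else 0)"
    using kernels assms unfolding is_ext_kernels_def unitv_def by auto
  moreover have "(\<Sum>d\<in>In_ext \<omega> E head s (tail e). k d e * fext F d (Inr b))
      = (\<Sum>d\<in>in_edges (tail e). k (Inr d) e * F d (Inr b))"
  proof (cases "tail e = s")
    case True
    have "in_edges (tail e) = {}" using True network unfolding network_def by auto
    moreover have "(\<Sum>d\<in>In_ext \<omega> E head s (tail e). k d e * fext F d (Inr b)) = 0"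
      using True unfolding In_ext_def by (simp add: sum.reindex fext_def unitv_def)
    ultimately show ?thesis by (simp only: sum.empty)
  next
    case False
    then show ?thesis unfolding In_ext_def by (simp add: sum.reindex fext_def)
  qed
  ultimately show ?thesis by simp
qed

text \<open>An error injected on \<open>e\<close> reaches any other edge only through the edges leaving
  its head.\<close>

lemma kernel_Inr_expand:
  assumes "e \<in> E" "ee \<in> E"
  shows "F ee (Inr e)
    = (\<Sum>f\<in>out_edges (head e). k (Inr e) f * F ee (Inr f)) + (if ee = e then 1 else 0)"
proof -
  define G where
    "G x = (\<Sum>f\<in>out_edges (head e). k (Inr e) f * F x (Inr f)) + (if x = e then 1 else 0)" for x
  have G_rec: "G x = (\<Sum>d\<in>in_edges (tail x). k (Inr d) x * G d) + (if x = e then 1 else 0)"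
    if x: "x \<in> E" for x
  proof -
    let ?In = "in_edges (tail x)" and ?Out = "out_edges (head e)"
    have fin: "finite ?In" "finite ?Out" using finite_E by auto
    have "(\<Sum>d\<in>?In. k (Inr d) x * G d)
        = (\<Sum>d\<in>?In. \<Sum>f\<in>?Out. k (Inr e) f * (k (Inr d) x * F d (Inr f)))
          + (\<Sum>d\<in>?In. k (Inr d) x * (if d = e then 1 else 0))"
      unfolding G_def by (simp add: distrib_left sum.distrib sum_distrib_left mult.left_commute)
    also have "(\<Sum>d\<in>?In. \<Sum>f\<in>?Out. k (Inr e) f * (k (Inr d) x * F d (Inr f)))
        = (\<Sum>f\<in>?Out. k (Inr e) f * (\<Sum>d\<in>?In. k (Inr d) x * F d (Inr f)))"
      by (simp add: sum.swap[of _ ?In] sum_distrib_left)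
    also have "\<dots> = (\<Sum>f\<in>?Out. k (Inr e) f * (F x (Inr f) - (if x = f then 1 else 0)))"
      using kernel_Inr_rec[OF x] by simp
    also have "\<dots> = (\<Sum>f\<in>?Out. k (Inr e) f * F x (Inr f))
        - (if tail x = head e then k (Inr e) x else 0)"
      using fin x
      by (simp add: right_diff_distrib sum_subtractf if_distrib[of "\<lambda>y. _ * y"] sum.delta
          cong: if_cong)
    also have "(\<Sum>d\<in>?In. k (Inr d) x * (if d = e then 1 else 0))
        = (if tail x = head e then k (Inr e) x else 0)"
      using fin assms(1) by (simp add: if_distrib[of "\<lambda>y. _ * y"] sum.delta' cong: if_cong)
    finally show ?thesis unfolding G_def by simp
  qed
  show ?thesis
    using edge_recursion_unique[where H = "\<lambda>x. F x (Inr e)" and H' = G,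
        OF kernel_Inr_rec G_rec assms(2)]
    unfolding G_def by simp
qed

definition relocatable :: "'e set \<Rightarrow> 'v \<Rightarrow> ('e \<Rightarrow> 'a) \<Rightarrow> bool" where
  "relocatable Y u z \<longleftrightarrow> (\<exists>w. matches w Y \<and> error_image E head F u w = error_image E head F u z)"

lemma relocatable_lincomb:
  assumes "\<And>f. f \<in> S \<Longrightarrow> relocatable Y u (W f)"
  shows "relocatable Y u (\<lambda>b. \<Sum>f\<in>S. c f * W f b)"
proof -
  obtain W' where W': "\<And>f. f \<in> S \<Longrightarrow> matches (W' f) Y"
    "\<And>f. f \<in> S \<Longrightarrow> error_image E head F u (W' f) = error_image E head F u (W f)"
    using assms unfolding relocatable_def by metis
  have "matches (\<lambda>b. \<Sum>f\<in>S. c f * W' f b) Y"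
    using W'(1) unfolding matches_def by simp
  moreover have "error_image E head F u (\<lambda>b. \<Sum>f\<in>S. c f * W' f b)
      = error_image E head F u (\<lambda>b. \<Sum>f\<in>S. c f * W f b)"
    unfolding error_image_lincomb using W'(2) by (simp cong: sum.cong)
  ultimately show ?thesis unfolding relocatable_def by blast
qed

lemma relocatable_unitv:
  "e \<in> E \<Longrightarrow> e \<notin> reach_avoiding Y u \<Longrightarrow> relocatable Y u (unitv e)"
proof (induction e rule: wf_induct_rule[OF wf_converse_edge_adj])
  case (1 e)
  show ?case
  proof (cases "e \<in> Y")
    case True
    then have "matches (unitv e) Y" unfolding matches_def unitv_def by auto
    then show ?thesis unfolding relocatable_def by blast
  next
    case False
    have IH: "relocatable Y u (unitv f)" if f: "f \<in> out_edges (head e)" for f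
    proof -
      have "f \<notin> reach_avoiding Y u" using reach_avoiding_Cons[OF 1(2) False, of f u] 1(3) f by auto
      then show ?thesis using 1(1)[of f] 1(2) f unfolding edge_adj_def by simp
    qed
    have "error_image E head F u (unitv e)
        = error_image E head F u (\<lambda>b. \<Sum>f\<in>out_edges (head e). k (Inr e) f * unitv f b)"
      (is "?lhs = ?rhs")
    proof
      fix ee
      show "?lhs ee = ?rhs ee"
      proof (cases "ee \<in> E \<and> head ee = u")
        case True
        have "ee \<noteq> e" using True 1(3) False reach_avoidingI[of "[]" e "[]" u Y] by auto
        have "?lhs ee = F ee (Inr e)"
          using True 1(2) by (simp add: error_image_unitv finite_E)
        also have "\<dots> = (\<Sum>f\<in>out_edges (head e). k (Inr e) f * F ee (Inr f))"
          using kernel_Inr_expand[OF 1(2), of ee] \<open>ee \<noteq> e\<close> True by simp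
        also have "\<dots> = (\<Sum>f\<in>out_edges (head e). k (Inr e) f * error_image E head F u (unitv f) ee)"
          using True by (intro sum.cong) (simp_all add: error_image_unitv finite_E)
        finally show ?thesis by (simp add: error_image_lincomb)
      next
        case False
        then show ?thesis by (simp only: error_image_def if_False)
      qed
    qed
    then show ?thesis
      using relocatable_lincomb[where S = "out_edges (head e)" and W = unitv and c = "k (Inr e)",
          OF IH]
      unfolding relocatable_def by simp
  qed
qed

lemma relocatable_if_edge_cut:
  assumes "separates Y u xi" "xi \<subseteq> E" "matches z xi"
  shows "relocatable Y u z"
proof -
  have "relocatable Y u (unitv e)" if "e \<in> xi" for e
  proof (rule relocatable_unitv)
    show "e \<in> E" "e \<notin> reach_avoiding Y u"
      using that assms(1,2) by (auto simp: edge_cut_iff_reach_avoiding)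
  qed
  then have "relocatable Y u (\<lambda>b. \<Sum>e\<in>xi. z e * unitv e b)" by (rule relocatable_lincomb)
  then show ?thesis
    using lincomb_unitv[OF finite_subset[OF assms(2) finite_E] assms(3)] by simp
qed

lemma error_images_Ecal_covered_by_Acal:
  assumes "r \<le> maxflow E tail head s t" "z \<in> Zcal (Ecal E tail head t r)"
  shows "\<exists>w\<in>Zcal (Acal E tail head t r). error_image E head F t w = error_image E head F t z"
proof -
  obtain xi where xi: "xi \<subseteq> E" "min_cut xi t \<le> r" "matches z xi"
    using assms(2) unfolding Zcal_def Ecal_def by blast
  obtain Y where Y: "Y \<in> Acal E tail head t r" "separates Y t xi"
    using ex_primary_cut_in_Acal[OF xi(1,2) assms(1)] by blast
  obtain w where "matches w Y" "error_image E head F t w = error_image E head F t z"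
    using relocatable_if_edge_cut[OF Y(2) xi(1,3)] unfolding relocatable_def by blast
  then show ?thesis using Y(1) unfolding Zcal_def by blast
qed

end

theorem theorem11:
  fixes V :: "'v set" and E :: "'e set" and tail head :: "'e \<Rightarrow> 'v"
    and s t :: 'v and T :: "'v set" and \<omega> r :: nat
    and k :: "(nat + 'e) \<Rightarrow> 'e \<Rightarrow> 'a::{field,finite}"
    and F :: "'e \<Rightarrow> (nat + 'e) \<Rightarrow> 'a"
  assumes "network V E tail head s T"
    and "\<omega> \<ge> 1"
    and "is_ext_kernels \<omega> E tail head s k F"
    and "t \<in> T"
    and "dimPhi \<omega> E head F t = \<omega>"
    and "r \<le> maxflow E tail head s t"
  shows "corrects \<omega> E head F t (Zcal (Acal E tail head t r)) \<longleftrightarrow>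
         corrects \<omega> E head F t (Zcal (Ecal E tail head t r))"
proof -
  interpret lnec_code V E tail head s T \<omega> k F
    using assms(1,3) by unfold_locales
  show ?thesis
    using Zcal_mono[OF Acal_subset_Ecal] error_images_Ecal_covered_by_Acal[OF assms(6)]
    by (rule corrects_iff_if_error_images_covered)
qed

end
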